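(* If $L$ is a lattice with associated torus $T=\mathrm{T}(1)\otimes L$, where $\mathrm{T}(1)=\mathbb{R}/\mathbb{Z}$, then there is a natural bijection between marked reflection structures on $L$ and marked reflection structures on $T$.
   Context: A lattice is a free abelian group of finite rank; $\mathrm{Aut}(L)=\mathrm{Aut}(T)$ for $T=\mathrm{T}(1)\otimes L$. A reflection on $L$ is an automorphism conjugate in $GL(r,\mathbb{Q})$ to $\mathrm{diag}(-1,1,\dots,1)$; an automorphism of $T$ is a reflection if the induced automorphism of $L=\pi_1T$ is. A marking of a reflection $\sigma$ of $L$ is an equivalence class $\pm(b,\beta)$, up to sign, of pairs with $b\in L$, $\beta:L\to\mathbb{Z}$ a homomorphism and $\sigma(x)=x+\beta(x)b$ for all $x$. A marked reflection structure on $L$ is a finite subgroup $W\subset\mathrm{Aut}(L)$ generated by its reflections, with markings $\pm(b_\sigma,\beta_\sigma)$ for every reflection $\sigma\in W$ such that $(w(b_\sigma),\beta_\sigma\circ w^{-1})=\pm(b_{w\sigma w^{-1}},\beta_{w\sigma w^{-1}})$ for $w\in W$. For the torus (written additively): a reflection $\sigma$ of $T$ is trivial mod $2$ if it fixes all $x$ with $2x=0$; a marking of $\sigma$ is an $h\in T$ lying in the identity component of $\{x:\sigma(x)=-x\}$ with $2h=0$ and $h\ne0$ if $\sigma$ is nontrivial mod $2$. A marked reflection structure on $T$ is a finite subgroup $W\subset\mathrm{Aut}(T)$ generated by its reflections with a marking $h_\sigma$ for each reflection $\sigma\in W$ such that $h_{w\sigma w^{-1}}=w(h_\sigma)$ for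 all $w\in W$. *)

theory Defs
  imports "HOL-Analysis.Analysis"
begin

text \<open>The lattice L is modelled as Z^n (type int^'n, 'n finite); every lattice of
  positive rank is isomorphic to one of these.  The torus T = T(1) (x) L is modelled
  as the product of unit circles in C^n (T(1) = R/Z identified with the unit circle via
  t |-> exp(2 pi i t)), written multiplicatively.\<close>


definition is_aut :: "(int^'n \<Rightarrow> int^'n) \<Rightarrow> bool" where
  "is_aut g \<longleftrightarrow> bij g \<and> (\<forall>x y. g (x + y) = g x + g y)"

definition Aut :: "(int^'n \<Rightarrow> int^'n) set" where
  "Aut = {g. is_aut g}"

definition rat_mat :: "(int^'n \<Rightarrow> int^'n) \<Rightarrow> rat^'n^'n" where
  "rat_mat g = (\<chi> i j. of_int (g (axis j 1) $ i))"

definition refl_diag :: "'n \<Rightarrow> rat^'n^'n" where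
  "refl_diag k = (\<chi> i j. if i = j then (if i = k then -1 else 1) else 0)"

definition is_reflection :: "(int^'n \<Rightarrow> int^'n) \<Rightarrow> bool" where
  "is_reflection \<sigma> \<longleftrightarrow> is_aut \<sigma> \<and>
     (\<exists>(P::rat^'n^'n) Q k. P ** Q = mat 1 \<and> Q ** P = mat 1 \<and> Q ** rat_mat \<sigma> ** P = refl_diag k)"

definition aut_subgroup :: "(int^'n \<Rightarrow> int^'n) set \<Rightarrow> bool" where
  "aut_subgroup H \<longleftrightarrow> H \<subseteq> Aut \<and> id \<in> H \<and> (\<forall>g\<in>H. \<forall>h\<in>H. g \<circ> h \<in> H) \<and> (\<forall>g\<in>H. inv g \<in> H)"

definition reflections_in :: "(int^'n \<Rightarrow> int^'n) set \<Rightarrow> (int^'n \<Rightarrow> int^'n) set" where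
  "reflections_in W = {\<sigma>\<in>W. is_reflection \<sigma>}"

text \<open>Finite subgroup of Aut(L) (= Aut(T)) generated by its reflections.\<close>
definition refl_group :: "(int^'n \<Rightarrow> int^'n) set \<Rightarrow> bool" where
  "refl_group W \<longleftrightarrow> aut_subgroup W \<and> finite W \<and>
     W = \<Inter>{H. aut_subgroup H \<and> reflections_in W \<subseteq> H}"

definition is_hom :: "(int^'n \<Rightarrow> int) \<Rightarrow> bool" where
  "is_hom \<beta> \<longleftrightarrow> (\<forall>x y. \<beta> (x + y) = \<beta> x + \<beta> y)"

definition mark_class :: "int^'n \<Rightarrow> (int^'n \<Rightarrow> int) \<Rightarrow> ((int^'n) \<times> (int^'n \<Rightarrow> int)) set" where
  "mark_class b \<beta> = {(b, \<beta>), (- b, \<lambda>x. - \<beta> x)}"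

definition is_L_marking :: "(int^'n \<Rightarrow> int^'n) \<Rightarrow> ((int^'n) \<times> (int^'n \<Rightarrow> int)) set \<Rightarrow> bool" where
  "is_L_marking \<sigma> M \<longleftrightarrow>
     (\<exists>b \<beta>. is_hom \<beta> \<and> (\<forall>x. \<sigma> x = x + \<beta> x *s b) \<and> M = mark_class b \<beta>)"

definition L_act_mark :: "(int^'n \<Rightarrow> int^'n) \<Rightarrow> ((int^'n) \<times> (int^'n \<Rightarrow> int)) set \<Rightarrow> ((int^'n) \<times> (int^'n \<Rightarrow> int)) set" where
  "L_act_mark w M = (\<lambda>(b, \<beta>). (w b, \<beta> \<circ> inv w)) ` M"

definition L_mrs :: "((int^'n \<Rightarrow> int^'n) set \<times> ((int^'n \<Rightarrow> int^'n) \<Rightarrow> ((int^'n) \<times> (int^'n \<Rightarrow> int)) set option)) set" where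
  "L_mrs = {(W, mk). refl_group W \<and>
     (\<forall>\<sigma>. \<sigma> \<notin> reflections_in W \<longrightarrow> mk \<sigma> = None) \<and>
     (\<forall>\<sigma>\<in>reflections_in W. \<exists>M. mk \<sigma> = Some M \<and> is_L_marking \<sigma> M) \<and>
     (\<forall>w\<in>W. \<forall>\<sigma>\<in>reflections_in W. mk (w \<circ> \<sigma> \<circ> inv w) = map_option (L_act_mark w) (mk \<sigma>))}"

definition torus :: "(complex^'n) set" where
  "torus = {z. \<forall>i. norm (z $ i) = 1}"

definition T_one :: "complex^'n" where
  "T_one = (\<chi> i. 1)"

definition T_neg :: "complex^'n \<Rightarrow> complex^'n" where
  "T_neg z = (\<chi> i. inverse (z $ i))"

definition T_act :: "(int^'n \<Rightarrow> int^'n) \<Rightarrow> complex^'n \<Rightarrow> complex^'n" where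
  "T_act g z = (\<chi> i. \<Prod>j\<in>UNIV. (z $ j) powi (g (axis j 1) $ i))"

definition trivial_mod2 :: "(int^'n \<Rightarrow> int^'n) \<Rightarrow> bool" where
  "trivial_mod2 \<sigma> \<longleftrightarrow> (\<forall>z\<in>torus. (\<forall>i. (z $ i)^2 = 1) \<longrightarrow> T_act \<sigma> z = z)"

definition is_T_marking :: "(int^'n \<Rightarrow> int^'n) \<Rightarrow> complex^'n \<Rightarrow> bool" where
  "is_T_marking \<sigma> h \<longleftrightarrow> h \<in> torus \<and>
     h \<in> connected_component_set {x \<in> torus. T_act \<sigma> x = T_neg x} T_one \<and>
     (\<forall>i. (h $ i)^2 = 1) \<and>
     (\<not> trivial_mod2 \<sigma> \<longrightarrow> h \<noteq> T_one)"

definition T_mrs :: "((int^'n \<Rightarrow> int^'n) set \<times> ((int^'n \<Rightarrow> int^'n) \<Rightarrow> (complex^'n) option)) set" where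
  "T_mrs = {(W, mh). refl_group W \<and>
     (\<forall>\<sigma>. \<sigma> \<notin> reflections_in W \<longrightarrow> mh \<sigma> = None) \<and>
     (\<forall>\<sigma>\<in>reflections_in W. \<exists>h. mh \<sigma> = Some h \<and> is_T_marking \<sigma> h) \<and>
     (\<forall>w\<in>W. \<forall>\<sigma>\<in>reflections_in W. mh (w \<circ> \<sigma> \<circ> inv w) = map_option (T_act w) (mh \<sigma>))}"

definition L_transport :: "(int^'n \<Rightarrow> int^'n) \<Rightarrow> ((int^'n \<Rightarrow> int^'n) set \<times> ((int^'n \<Rightarrow> int^'n) \<Rightarrow> ((int^'n) \<times> (int^'n \<Rightarrow> int)) set option))
   \<Rightarrow> ((int^'n \<Rightarrow> int^'n) set \<times> ((int^'n \<Rightarrow> int^'n) \<Rightarrow> ((int^'n) \<times> (int^'n \<Rightarrow> int)) set option))" where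
  "L_transport g S = ((\<lambda>w. g \<circ> w \<circ> inv g) ` fst S,
      \<lambda>\<tau>. map_option (L_act_mark g) (snd S (inv g \<circ> \<tau> \<circ> g)))"

definition T_transport :: "(int^'n \<Rightarrow> int^'n) \<Rightarrow> ((int^'n \<Rightarrow> int^'n) set \<times> ((int^'n \<Rightarrow> int^'n) \<Rightarrow> (complex^'n) option))
   \<Rightarrow> ((int^'n \<Rightarrow> int^'n) set \<times> ((int^'n \<Rightarrow> int^'n) \<Rightarrow> (complex^'n) option))" where
  "T_transport g S = ((\<lambda>w. g \<circ> w \<circ> inv g) ` fst S,
      \<lambda>\<tau>. map_option (T_act g) (snd S (inv g \<circ> \<tau> \<circ> g)))"

end

theory Submission
  imports Defs
begin

(* A marking \<plusminus>(b, \<beta>) of a reflection \<sigma> = 1 + \<beta> \<otimes> b of L is sent to the 2-torsion point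
   b \<otimes> 1/2 of T.  Comparing traces gives \<beta> b = -2, so \<sigma> b = -b and the segment from 0 to
   b \<otimes> 1/2 in direction b lies in {x. \<sigma> x = -x}: the image is a marking of T.  Conversely
   \<sigma> - 1 has rank one, \<sigma> = 1 + \<phi> \<otimes> v with v primitive.  The characters
   x\<^sub>i^v\<^sub>k x\<^sub>k^(-v\<^sub>i) square to 1 on {x. \<sigma> x = -x}, so they are 1 on its identity component;
   hence a 2-torsion point there is 0 or v \<otimes> 1/2.  The latter comes from (v, \<phi>); the former
   only matters when \<sigma> is trivial mod 2, where \<phi> is even and (2v, \<phi>/2) is a marking.
   Finally b \<otimes> 1/2 determines \<plusminus>(b, \<beta>): b' \<equiv> b mod 2 together with \<beta> b = \<beta>' b' = -2 forces
   b' = \<plusminus>b.  The resulting bijection of markings is equivariant, hence induces the bijection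
   of marked reflection structures. *)

section \<open>Additive maps on \<open>\<int>\<^sup>n\<close>\<close>

lemma is_hom_iff_additive: "is_hom \<beta> \<longleftrightarrow> Modules.additive \<beta>"
  by (simp add: is_hom_def Modules.additive_def)

lemma is_aut_additive: "is_aut g \<Longrightarrow> Modules.additive g"
  by (simp add: is_aut_def Modules.additive_def)

lemma is_aut_inv:
  assumes "is_aut g"
  shows "is_aut (inv g)"
proof -
  have g: "bij g" "Modules.additive g" using assms is_aut_additive by (auto simp: is_aut_def)
  have "inv g (x + y) = inv g x + inv g y" for x y
  proof -
    have "g (inv g x + inv g y) = x + y"
      using g by (simp add: Modules.additive.add bij_is_surj surj_f_inv_f)
    then show ?thesis using g(1) by (metis bij_inv_eq_iff)
  qed
  then show ?thesis using g by (simp add: is_aut_def bij_imp_bij_inv)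
qed

lemma additive_component: "Modules.additive f \<Longrightarrow> Modules.additive (\<lambda>x. f x $ i)"
  by (simp add: Modules.additive_def)

lemma additive_int_smult:
  fixes \<beta> :: "int^'n \<Rightarrow> int"
  assumes "Modules.additive \<beta>"
  shows "\<beta> (c *s x) = c * \<beta> x"
proof (induction c rule: int_induct[where k = 0])
  case base
  then show ?case using Modules.additive.zero[OF assms] by simp
next
  case (step1 c)
  then show ?case by (simp add: vector_sadd_rdistrib Modules.additive.add[OF assms] algebra_simps)
next
  case (step2 c)
  then show ?case by (simp add: vector_sub_rdistrib Modules.additive.diff[OF assms] algebra_simps)
qed

lemma additive_vec_smult:
  fixes f :: "int^'n \<Rightarrow> int^'m"
  assumes "Modules.additive f"
  shows "f (c *s x) = c *s f x"
  by (simp add: vec_eq_iff additive_int_smult[OF additive_component[OF assms]])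

lemma additive_int_expansion:
  fixes \<beta> :: "int^'n \<Rightarrow> int"
  assumes "Modules.additive \<beta>"
  shows "\<beta> x = (\<Sum>j\<in>UNIV. x $ j * \<beta> (axis j 1))"
proof -
  have "\<beta> x = \<beta> (\<Sum>j\<in>UNIV. x $ j *s axis j 1)" by (simp add: basis_expansion)
  then show ?thesis by (simp add: Modules.additive.sum[OF assms] additive_int_smult[OF assms])
qed

lemma additive_vec_expansion:
  fixes f :: "int^'n \<Rightarrow> int^'m"
  assumes "Modules.additive f"
  shows "f x $ i = (\<Sum>j\<in>UNIV. x $ j * f (axis j 1) $ i)"
  using additive_int_expansion[OF additive_component[OF assms]] .

section \<open>Reflections of \<open>\<int>\<^sup>n\<close>\<close>

lemma is_reflection_additive: "is_reflection \<sigma> \<Longrightarrow> Modules.additive \<sigma>"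
  by (simp add: is_reflection_def is_aut_additive)

lemma trace_similar:
  fixes A :: "'a::comm_semiring_1^'n^'n"
  assumes "P ** Q = mat 1"
  shows "trace (Q ** A ** P) = trace A"
  using assms by (metis matrix_mul_assoc matrix_mul_lid trace_mul_sym)

lemma trace_refl_diag: "trace (refl_diag k :: rat^'n^'n) = of_nat CARD('n) - 2"
proof -
  have "trace (refl_diag k :: rat^'n^'n) = (\<Sum>i\<in>UNIV. 1 - (if i = k then 2 else 0))"
    by (auto simp: trace_def refl_diag_def intro!: sum.cong)
  then show ?thesis by (simp add: sum_subtractf)
qed

lemma trace_rat_mat_rank_one_update:
  fixes \<sigma> :: "int^'n \<Rightarrow> int^'n"
  assumes "Modules.additive \<beta>" and "\<forall>x. \<sigma> x = x + \<beta> x *s b"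
  shows "trace (rat_mat \<sigma>) = of_nat CARD('n) + of_int (\<beta> b)"
proof -
  have "trace (rat_mat \<sigma>) = (\<Sum>i\<in>UNIV. 1 + of_int (\<beta> (axis i 1) * b $ i))"
    by (auto simp: trace_def rat_mat_def assms(2) axis_def intro!: sum.cong)
  then show ?thesis
    by (simp add: sum.distrib additive_int_expansion[OF assms(1), of b] mult.commute)
qed

lemma reflection_pairing:
  fixes \<sigma> :: "int^'n \<Rightarrow> int^'n"
  assumes "is_reflection \<sigma>" and "Modules.additive \<beta>" and "\<forall>x. \<sigma> x = x + \<beta> x *s b"
  shows "\<beta> b = -2"
proof -
  obtain P Q :: "rat^'n^'n" and k where "P ** Q = mat 1" "Q ** rat_mat \<sigma> ** P = refl_diag k"
    using assms(1) unfolding is_reflection_def by blast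
  then have "trace (rat_mat \<sigma>) = of_nat CARD('n) - 2"
    by (metis trace_similar trace_refl_diag)
  then show ?thesis using trace_rat_mat_rank_one_update[OF assms(2,3)] by simp
qed

lemma reflection_minus_id_entries:
  fixes \<sigma> :: "int^'n \<Rightarrow> int^'n"
  assumes "is_reflection \<sigma>"
  obtains P Q :: "rat^'n^'n" and k where "Q ** P = mat 1"
    and "\<And>i j. of_int (\<sigma> (axis j 1) $ i - axis j 1 $ i) = - 2 * P $ i $ k * Q $ k $ j"
proof -
  obtain P Q :: "rat^'n^'n" and k where PQ: "P ** Q = mat 1" "Q ** P = mat 1"
    and conj: "Q ** rat_mat \<sigma> ** P = refl_diag k"
    using assms unfolding is_reflection_def by blast
  \<comment> \<open>\<open>rat_mat \<sigma> = P diag(-1, 1, ..., 1) P\<inverse> = 1 - 2 (P e\<^sub>k) (e\<^sub>k\<^sup>T P\<inverse>)\<close>\<close>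
  have "P ** (Q ** rat_mat \<sigma> ** P) ** Q = (P ** Q) ** rat_mat \<sigma> ** (P ** Q)"
    by (simp add: matrix_mul_assoc)
  then have \<sigma>_conj: "rat_mat \<sigma> = P ** refl_diag k ** Q"
    using PQ conj by (simp add: matrix_mul_lid matrix_mul_rid)
  have "of_int (\<sigma> (axis j 1) $ i) = (P ** Q) $ i $ j - 2 * P $ i $ k * Q $ k $ j" for i j
  proof -
    have "of_int (\<sigma> (axis j 1) $ i) = (P ** refl_diag k ** Q) $ i $ j"
      by (simp add: rat_mat_def flip: \<sigma>_conj)
    also have "\<dots> = (\<Sum>l\<in>UNIV. (\<Sum>m\<in>UNIV. P $ i $ m * refl_diag k $ m $ l) * Q $ l $ j)"
      by (simp add: matrix_matrix_mult_def)
    also have "\<dots> = (\<Sum>l\<in>UNIV. P $ i $ l * Q $ l $ j - (if l = k then 2 * P $ i $ k * Q $ k $ j else 0))"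
      by (intro sum.cong) (auto simp: refl_diag_def if_distrib[of "(*) _"] sum.delta' cong: if_cong)
    finally show ?thesis by (simp add: sum_subtractf matrix_matrix_mult_def)
  qed
  then have "of_int (\<sigma> (axis j 1) $ i - axis j 1 $ i) = - 2 * P $ i $ k * Q $ k $ j" for i j
    using PQ(1) by (simp add: mat_def axis_def)
  with PQ(2) show thesis by (rule that)
qed

lemma reflection_minus_id_rank_one:
  fixes \<sigma> :: "int^'n \<Rightarrow> int^'n"
  assumes "is_reflection \<sigma>"
  defines "D \<equiv> \<lambda>i j. \<sigma> (axis j 1) $ i - axis j 1 $ i"
  shows "D i j * D p q = D i q * D p j" and "\<exists>i j. D i j \<noteq> 0"
proof -
  obtain P Q :: "rat^'n^'n" and k where QP: "Q ** P = mat 1"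
    and D: "\<And>i j. of_int (D i j) = - 2 * P $ i $ k * Q $ k $ j"
    unfolding D_def using reflection_minus_id_entries[OF assms(1)] by metis
  have "(of_int (D i j * D p q) :: rat) = of_int (D i q * D p j)"
    by (simp only: of_int_mult D) (simp add: algebra_simps)
  then show "D i j * D p q = D i q * D p j" by (simp only: of_int_eq_iff)
  show "\<exists>i j. D i j \<noteq> 0"
  proof (rule ccontr)
    assume "\<not> ?thesis"
    then have "Q $ k $ m * P $ m $ k = 0" for m using D[of m m] by auto
    then have "(Q ** P) $ k $ k = 0" by (auto simp: matrix_matrix_mult_def intro!: sum.neutral)
    then show False using QP by (simp add: mat_def)
  qed
qed

lemma bezout_Gcd_int:
  fixes c :: "'a \<Rightarrow> int"
  assumes "finite I"
  shows "\<exists>a. (\<Sum>i\<in>I. a i * c i) = Gcd (c ` I)"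
  using assms
proof (induction I rule: finite_induct)
  case empty
  then show ?case by simp
next
  case (insert x F)
  then obtain a where a: "(\<Sum>i\<in>F. a i * c i) = Gcd (c ` F)" by blast
  obtain u v where uv: "u * c x + v * Gcd (c ` F) = gcd (c x) (Gcd (c ` F))"
    using bezout_int by blast
  define a' where "a' = (\<lambda>i. if i = x then u else v * a i)"
  have "(\<Sum>i\<in>F. a' i * c i) = v * (\<Sum>i\<in>F. a i * c i)"
    using insert.hyps by (auto simp: a'_def sum_distrib_left mult.assoc intro!: sum.cong)
  then have "(\<Sum>i\<in>insert x F. a' i * c i) = gcd (c x) (Gcd (c ` F))"
    using insert.hyps uv a by (simp add: a'_def)
  then show ?case by auto
qed

lemma rank_one_int_matrix_factorization:
  fixes M :: "'m::finite \<Rightarrow> 'n \<Rightarrow> int"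
  assumes minors: "\<And>i j p q. M i j * M p q = M i q * M p j" and nz: "M i0 j0 \<noteq> 0"
  obtains v f and a where "\<And>i j. M i j = v i * f j" and "(\<Sum>i\<in>UNIV. a i * v i) = 1"
proof -
  define c where "c = (\<lambda>i. M i j0)"
  define g where "g = Gcd (range c)"
  obtain a where a: "(\<Sum>i\<in>UNIV. a i * c i) = g"
    using bezout_Gcd_int[of UNIV c] by (auto simp: g_def)
  have g0: "g \<noteq> 0" using nz by (auto simp: g_def c_def Gcd_0_iff)
  define v where "v = (\<lambda>i. c i div g)"
  have "g dvd c i" for i unfolding g_def by (rule Gcd_dvd) simp
  then have gv: "c i = g * v i" for i unfolding v_def by (rule dvd_mult_div_cancel[symmetric])
  have "g * (\<Sum>i\<in>UNIV. a i * v i) = (\<Sum>i\<in>UNIV. a i * c i)"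
    by (simp add: gv sum_distrib_left algebra_simps)
  then have av: "(\<Sum>i\<in>UNIV. a i * v i) = 1" using a g0 by simp
  define f where "f = (\<lambda>j. \<Sum>i\<in>UNIV. a i * M i j)"
  have cf: "c i0 * f j = M i0 j * g" for j
  proof -
    have "c i0 * f j = (\<Sum>i\<in>UNIV. a i * (M i j * M i0 j0))"
      by (simp add: f_def c_def sum_distrib_left algebra_simps)
    also have "\<dots> = (\<Sum>i\<in>UNIV. a i * (M i j0 * M i0 j))" by (simp only: minors[of _ j i0 j0])
    also have "\<dots> = M i0 j * (\<Sum>i\<in>UNIV. a i * c i)"
      by (simp add: c_def sum_distrib_left algebra_simps)
    also have "\<dots> = M i0 j * g" by (simp only: a)
    finally show ?thesis .
  qed
  have "c i0 * M i j = c i0 * (v i * f j)" for i j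
  proof -
    have "c i0 * M i j = M i0 j * c i" using minors[of i j i0 j0] by (simp add: c_def mult.commute)
    also have "\<dots> = M i0 j * g * v i" by (simp add: gv)
    also have "\<dots> = c i0 * (v i * f j)" by (simp add: cf[symmetric])
    finally show ?thesis .
  qed
  then have "M i j = v i * f j" for i j using nz by (simp add: c_def)
  from this av show thesis by (rule that)
qed

lemma reflection_rank_one_form:
  fixes \<sigma> :: "int^'n \<Rightarrow> int^'n"
  assumes "is_reflection \<sigma>"
  obtains v \<phi> k where "Modules.additive \<phi>" and "\<forall>x. \<sigma> x = x + \<phi> x *s v" and "odd (v $ k)"
proof -
  define D where "D = (\<lambda>i j. \<sigma> (axis j 1) $ i - axis j 1 $ i)"
  obtain i0 j0 where "D i0 j0 \<noteq> 0"
    using reflection_minus_id_rank_one(2)[OF assms] unfolding D_def by blast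
  with reflection_minus_id_rank_one(1)[OF assms]
  obtain v f a where vf: "\<And>i j. D i j = v i * f j" and av: "(\<Sum>i\<in>UNIV. a i * v i) = 1"
    unfolding D_def by (rule rank_one_int_matrix_factorization) blast
  have "\<exists>k. odd (v k)"
  proof (rule ccontr)
    assume "\<not> ?thesis"
    then have "even (\<Sum>i\<in>UNIV. a i * v i)" by (auto intro!: dvd_sum)
    then show False using av by simp
  qed
  then obtain k where k: "odd ((\<chi> i. v i) $ k)" by auto
  define \<phi> where "\<phi> = (\<lambda>x::int^'n. \<Sum>j\<in>UNIV. x $ j * f j)"
  have "Modules.additive \<phi>"
    by (simp add: Modules.additive_def \<phi>_def sum.distrib algebra_simps)
  moreover have "\<sigma> x $ i = x $ i + \<phi> x * v i" for x i
  proof -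
    have \<sigma>_add: "Modules.additive \<sigma>" by (rule is_reflection_additive[OF assms])
    have "\<sigma> (axis j 1) $ i = axis j 1 $ i + v i * f j" for j
      using vf[of i j] unfolding D_def by linarith
    then have "\<sigma> x $ i = (\<Sum>j\<in>UNIV. x $ j * (axis j 1 $ i + v i * f j))"
      by (simp only: additive_vec_expansion[OF \<sigma>_add, of x i])
    also have "\<dots> = x $ i + \<phi> x * v i"
      by (simp add: \<phi>_def algebra_simps sum.distrib sum_distrib_left axis_def
          if_distrib[of "(*) _"] sum.delta' cong: if_cong)
    finally show ?thesis .
  qed
  then have "\<forall>x. \<sigma> x = x + \<phi> x *s (\<chi> i. v i)" by (simp add: vec_eq_iff)
  ultimately show thesis using k that by blast
qed

section \<open>Points of the torus\<close>

(* (t / 2\<pi>) \<otimes> b, with T(1) identified with the unit circle *)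
definition torus_point :: "real \<Rightarrow> int^'n \<Rightarrow> complex^'n" where
  "torus_point t b = (\<chi> j. cis (t * of_int (b $ j)))"

abbreviation half_point :: "int^'n \<Rightarrow> complex^'n" where
  "half_point \<equiv> torus_point pi"

definition neg_fixed_set :: "(int^'n \<Rightarrow> int^'n) \<Rightarrow> (complex^'n) set" where
  "neg_fixed_set \<sigma> = {x \<in> torus. T_act \<sigma> x = T_neg x}"

lemma prod_cis: "(\<Prod>j\<in>A. cis (f j)) = cis (\<Sum>j\<in>A. f j)"
  by (induction A rule: infinite_finite_induct) (simp_all add: cis_mult)

lemma cis_pi_times_int: "cis (pi * of_int m) = (if even m then 1 else -1)"
proof -
  have "cis (pi * of_int m) = cis pi powi m" by (simp only: cis_power_int mult.commute)
  then show ?thesis by (simp add: power_int_minus_left)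
qed

lemma T_act_cis:
  "T_act g (\<chi> j. cis (\<theta> j)) = (\<chi> i. cis (\<Sum>j\<in>UNIV. of_int (g (axis j 1) $ i) * \<theta> j))"
  by (simp add: T_act_def cis_power_int prod_cis)

lemma T_act_torus_point:
  assumes "Modules.additive g"
  shows "T_act g (torus_point t b) = torus_point t (g b)"
proof -
  have "(\<Sum>j\<in>UNIV. of_int (g (axis j 1) $ i) * (t * of_int (b $ j))) = t * of_int (g b $ i)" for i
    by (simp add: additive_vec_expansion[OF assms, of b] sum_distrib_left algebra_simps)
  then show ?thesis by (simp add: torus_point_def T_act_cis)
qed

lemma T_neg_torus_point: "T_neg (torus_point t b) = torus_point t (- b)"
  by (simp add: T_neg_def torus_point_def vec_eq_iff cis_inverse)

lemma torus_point_in_torus: "torus_point t b \<in> torus"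
  by (simp add: torus_point_def torus_def)

lemma half_point_eq_iff: "half_point b = half_point c \<longleftrightarrow> (\<forall>i. even (b $ i - c $ i))"
  by (simp add: torus_point_def vec_eq_iff cis_pi_times_int) blast

lemma half_point_uminus: "half_point (- b) = half_point b"
  by (simp add: half_point_eq_iff)

lemma half_point_zero: "half_point 0 = T_one"
  by (simp add: T_one_def torus_point_def vec_eq_iff)

lemma half_point_square: "(half_point b $ i)\<^sup>2 = 1"
  by (simp add: torus_point_def cis_pi_times_int)

lemma two_torsion_half_point:
  assumes "\<forall>i. (z $ i)\<^sup>2 = (1::complex)"
  obtains d where "z = half_point d"
proof -
  have "z $ i = 1 \<or> z $ i = -1" for i
    using assms by (simp add: power2_eq_1_iff)
  then have "z = half_point (\<chi> i. if z $ i = 1 then 0 else 1)"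
    by (auto simp: torus_point_def vec_eq_iff cis_pi_times_int)
  then show thesis by (rule that)
qed

lemma trivial_mod2_iff:
  assumes "Modules.additive \<sigma>"
  shows "trivial_mod2 \<sigma> \<longleftrightarrow> (\<forall>d. half_point (\<sigma> d) = half_point d)"
proof
  assume "trivial_mod2 \<sigma>"
  then show "\<forall>d. half_point (\<sigma> d) = half_point d"
    using torus_point_in_torus half_point_square
    by (metis trivial_mod2_def T_act_torus_point[OF assms])
next
  assume "\<forall>d. half_point (\<sigma> d) = half_point d"
  then show "trivial_mod2 \<sigma>"
    unfolding trivial_mod2_def
    by (metis two_torsion_half_point T_act_torus_point[OF assms])
qed

lemma half_point_is_T_marking:
  fixes \<sigma> :: "int^'n \<Rightarrow> int^'n"
  assumes "is_reflection \<sigma>" and "Modules.additive \<beta>" and \<sigma>: "\<forall>x. \<sigma> x = x + \<beta> x *s b"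
  shows "is_T_marking \<sigma> (half_point b)"
proof -
  have \<sigma>_add: "Modules.additive \<sigma>" by (rule is_reflection_additive[OF assms(1)])
  have \<sigma>b: "\<sigma> b = - b"
    using reflection_pairing[OF assms] \<sigma> by (simp add: vec_eq_iff)
  \<comment> \<open>the segment from \<open>0\<close> to \<open>b \<otimes> 1/2\<close> lies in \<open>{x. \<sigma> x = -x}\<close> because \<open>\<sigma> b = -b\<close>\<close>
  define \<gamma> where "\<gamma> s = torus_point (pi * s) b" for s
  have "\<gamma> ` {0..1} \<subseteq> neg_fixed_set \<sigma>"
    by (auto simp: \<gamma>_def neg_fixed_set_def torus_point_in_torus T_act_torus_point[OF \<sigma>_add] \<sigma>b
        T_neg_torus_point)
  moreover have "connected (\<gamma> ` {0..1})"
    by (rule connected_continuous_image) (auto simp: \<gamma>_def torus_point_def intro!: continuous_intros)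
  moreover have "\<gamma> 0 = T_one" "\<gamma> 1 = half_point b"
    by (simp_all add: \<gamma>_def torus_point_def T_one_def)
  ultimately have "half_point b \<in> connected_component_set (neg_fixed_set \<sigma>) T_one"
    using connected_component_maximal[of T_one "\<gamma> ` {0..1}"]
    by (metis atLeastAtMost_iff image_eqI order_refl zero_le_one subsetD)
  moreover have "trivial_mod2 \<sigma>" if "half_point b = T_one"
    using that \<sigma> by (simp add: trivial_mod2_iff[OF \<sigma>_add] half_point_eq_iff flip: half_point_zero)
  ultimately show ?thesis
    by (auto simp: is_T_marking_def neg_fixed_set_def torus_point_in_torus half_point_square)
qed

section \<open>From markings of \<open>T\<close> to markings of \<open>L\<close>\<close>

lemma torus_eq_cis_Arg:
  assumes "x \<in> torus"
  shows "x = (\<chi> j. cis (Arg (x $ j)))"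
proof -
  have "cis (Arg (x $ j)) = x $ j" for j
  proof -
    have norm: "norm (x $ j) = 1" using assms by (simp add: torus_def)
    then have "cis (Arg (x $ j)) = sgn (x $ j)" by (intro cis_Arg) auto
    with norm show ?thesis by (simp add: sgn_div_norm)
  qed
  then show ?thesis by (simp add: vec_eq_iff)
qed

lemma cis_eq_imp_cis_diff: "cis a = cis b \<Longrightarrow> cis (a - b) = 1"
  by (metis cis_divide divide_self_if cis_neq_zero)

lemma T_one_in_neg_fixed_set: "T_one \<in> neg_fixed_set \<sigma>"
  by (simp add: neg_fixed_set_def torus_def T_one_def T_act_def T_neg_def)

lemma neg_fixed_character_square:
  fixes \<sigma> :: "int^'n \<Rightarrow> int^'n"
  assumes \<sigma>: "\<forall>x. \<sigma> x = x + \<phi> x *s v" and x: "x \<in> neg_fixed_set \<sigma>"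
  shows "((x $ i) powi (v $ k) * (x $ k) powi (- v $ i))\<^sup>2 = 1"
proof -
  define \<theta> where "\<theta> j = Arg (x $ j)" for j
  have x_cis: "x = (\<chi> j. cis (\<theta> j))"
    using x torus_eq_cis_Arg unfolding \<theta>_def neg_fixed_set_def by blast
  define \<Phi> where "\<Phi> = (\<Sum>j\<in>UNIV. of_int (\<phi> (axis j 1)) * \<theta> j)"
  \<comment> \<open>\<open>\<sigma> x = x\<inverse>\<close> says \<open>2 \<theta> i + v i \<Phi> \<equiv> 0 (mod 2\<pi>)\<close>; the character eliminates \<open>\<Phi>\<close>.\<close>
  have inverted: "cis (2 * \<theta> i + of_int (v $ i) * \<Phi>) = 1" for i
  proof -
    have "(\<Sum>j\<in>UNIV. of_int (\<sigma> (axis j 1) $ i) * \<theta> j)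
        = (\<Sum>j\<in>UNIV. (if j = i then \<theta> i else 0) + of_int (v $ i) * (of_int (\<phi> (axis j 1)) * \<theta> j))"
      by (rule sum.cong) (auto simp: \<sigma> axis_def algebra_simps)
    also have "\<dots> = \<theta> i + of_int (v $ i) * \<Phi>"
      by (simp add: sum.distrib \<Phi>_def sum_distrib_left)
    finally have "T_act \<sigma> x $ i = cis (\<theta> i + of_int (v $ i) * \<Phi>)"
      by (simp add: x_cis T_act_cis)
    moreover have "T_act \<sigma> x $ i = cis (- \<theta> i)"
      using x by (simp add: neg_fixed_set_def x_cis T_neg_def cis_inverse)
    ultimately have "cis ((\<theta> i + of_int (v $ i) * \<Phi>) - (- \<theta> i)) = 1"
      by (intro cis_eq_imp_cis_diff) simp
    then show ?thesis by (simp add: algebra_simps mult_2)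
  qed
  have "((x $ i) powi (v $ k) * (x $ k) powi (- v $ i))\<^sup>2
      = cis (2 * \<theta> i + of_int (v $ i) * \<Phi>) powi (v $ k) * cis (2 * \<theta> k + of_int (v $ k) * \<Phi>) powi (- v $ i)"
    by (simp add: x_cis cis_power_int cis_mult power2_eq_square algebra_simps)
  then show ?thesis by (simp add: inverted)
qed

lemma component_character_eq_one:
  fixes \<sigma> :: "int^'n \<Rightarrow> int^'n"
  assumes \<sigma>: "\<forall>x. \<sigma> x = x + \<phi> x *s v"
    and h: "h \<in> connected_component_set (neg_fixed_set \<sigma>) T_one"
  shows "(h $ i) powi (v $ k) * (h $ k) powi (- v $ i) = 1"
proof -
  define C where "C = connected_component_set (neg_fixed_set \<sigma>) T_one"
  define \<psi> where "\<psi> x = (x $ i) powi (v $ k) * (x $ k) powi (- v $ i)" for x :: "complex^'n"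
  have C_sub: "C \<subseteq> neg_fixed_set \<sigma>" by (simp add: C_def connected_component_subset)
  have "norm (x $ j) = 1" if "x \<in> C" for x j
    using C_sub that by (auto simp: neg_fixed_set_def torus_def)
  then have "x $ j \<noteq> 0" if "x \<in> C" for x j
    using that by (metis norm_zero zero_neq_one)
  then have "continuous_on C \<psi>" unfolding \<psi>_def by (intro continuous_intros) auto
  then have "connected (\<psi> ` C)"
    by (rule connected_continuous_image) (simp add: C_def connected_connected_component)
  moreover have "\<psi> ` C \<subseteq> {1, -1}"
    using neg_fixed_character_square[OF \<sigma>] C_sub by (fastforce simp: \<psi>_def power2_eq_1_iff)
  moreover have "1 \<in> \<psi> ` C"
  proof -
    have "T_one \<in> C" by (simp add: C_def T_one_in_neg_fixed_set)
    moreover have "\<psi> T_one = 1" by (simp add: \<psi>_def T_one_def)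
    ultimately show ?thesis by force
  qed
  ultimately have "\<psi> ` C = {1}"
    by (metis connected_finite_iff_sing finite.emptyI finite_insert finite_subset empty_iff singletonD)
  then show ?thesis using h by (auto simp: C_def \<psi>_def)
qed

lemma trivial_mod2_rank_one_even:
  fixes \<sigma> :: "int^'n \<Rightarrow> int^'n"
  assumes "Modules.additive \<phi>" and \<sigma>: "\<forall>x. \<sigma> x = x + \<phi> x *s v" and "odd (v $ k)"
    and "trivial_mod2 \<sigma>"
  shows "even (\<phi> x)"
proof -
  have "Modules.additive \<sigma>"
    using Modules.additive.add[OF assms(1)] \<sigma> by (simp add: Modules.additive_def vector_sadd_rdistrib)
  then have "half_point (axis j 1 + \<phi> (axis j 1) *s v) = half_point (axis j 1)" for j
    using assms(4) \<sigma> by (simp add: trivial_mod2_iff)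
  then have "even (\<phi> (axis j 1))" for j
    using \<open>odd (v $ k)\<close> by (simp add: half_point_eq_iff) (metis even_mult_iff)
  then show ?thesis
    by (subst additive_int_expansion[OF assms(1)]) (auto intro!: dvd_sum)
qed

lemma T_marking_lift:
  fixes \<sigma> :: "int^'n \<Rightarrow> int^'n"
  assumes "is_reflection \<sigma>" and h: "is_T_marking \<sigma> h"
  obtains b \<beta> where "Modules.additive \<beta>" and "\<forall>x. \<sigma> x = x + \<beta> x *s b" and "half_point b = h"
proof -
  obtain v \<phi> k where \<phi>: "Modules.additive \<phi>" and \<sigma>: "\<forall>x. \<sigma> x = x + \<phi> x *s v"
    and vk: "odd (v $ k)"
    by (rule reflection_rank_one_form[OF assms(1)])
  obtain c where hc: "h = half_point c"
    using h two_torsion_half_point unfolding is_T_marking_def by blast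
  \<comment> \<open>the characters force \<open>c \<equiv> c\<^sub>k v (mod 2)\<close>, i.e. \<open>h\<close> is \<open>0\<close> or \<open>v \<otimes> 1/2\<close>\<close>
  have "even (c $ i - c $ k * v $ i)" for i
  proof -
    have "(h $ i) powi (v $ k) * (h $ k) powi (- v $ i) = 1"
      using component_character_eq_one[OF \<sigma>] h by (simp add: is_T_marking_def neg_fixed_set_def)
    then have "cis (pi * of_int (v $ k * c $ i - v $ i * c $ k)) = 1"
      by (simp add: hc torus_point_def cis_power_int cis_mult algebra_simps)
    then have "even (v $ k * c $ i - v $ i * c $ k)"
      unfolding cis_pi_times_int by (simp split: if_splits)
    then show ?thesis using vk by (auto simp: algebra_simps elim!: oddE)
  qed
  show thesis
  proof (cases "even (c $ k)")
    case False
    then have "half_point v = h"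
      using \<open>even (c $ _ - c $ k * v $ _)\<close> by (auto simp: hc half_point_eq_iff elim!: oddE)
    with \<phi> \<sigma> show thesis by (rule that)
  next
    case True
    then have "h = T_one"
      using \<open>even (c $ _ - c $ k * v $ _)\<close> by (auto simp: hc half_point_eq_iff simp flip: half_point_zero)
    then have "trivial_mod2 \<sigma>" using h by (auto simp: is_T_marking_def)
    then have even: "even (\<phi> x)" for x by (rule trivial_mod2_rank_one_even[OF \<phi> \<sigma> vk])
    show thesis
    proof (rule that)
      show "Modules.additive (\<lambda>x. \<phi> x div 2)"
        using Modules.additive.add[OF \<phi>] even by (simp add: Modules.additive_def)
      show "\<forall>x. \<sigma> x = x + (\<phi> x div 2) *s (2 *s v)"
        using \<sigma> even by (simp add: vec_eq_iff)
      show "half_point (2 *s v) = h"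
        using \<open>h = T_one\<close> by (simp add: half_point_eq_iff flip: half_point_zero)
    qed
  qed
qed

section \<open>The correspondence of markings\<close>

lemma rank_one_data_unique_mod2:
  fixes b b' :: "int^'n"
  assumes \<beta>: "Modules.additive \<beta>" and \<beta>': "Modules.additive \<beta>'"
    and same: "\<And>x. \<beta> x *s b = \<beta>' x *s b'"
    and \<beta>b: "\<beta> b = -2" and \<beta>'b': "\<beta>' b' = -2"
    and mod2: "\<forall>i. even (b' $ i - b $ i)"
  shows "(b' = b \<and> \<beta>' = \<beta>) \<or> (b' = - b \<and> \<beta>' = (\<lambda>x. - \<beta> x))"
proof -
  obtain i0 where i0: "b $ i0 \<noteq> 0"
    using \<beta>b Modules.additive.zero[OF \<beta>] by (metis vec_eq_iff zero_index zero_neq_neg_numeral)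
  define d where "d = (\<chi> i. (b' $ i - b $ i) div 2)"
  have b': "b' = b + 2 *s d" using mod2 by (auto simp: vec_eq_iff d_def)
  \<comment> \<open>\<open>p\<close> and \<open>q\<close> are twice an odd number, yet \<open>p q = 4\<close>; so \<open>p = \<plusminus>2\<close>\<close>
  define p where "p = \<beta>' b"
  define q where "q = \<beta> b'"
  have p: "p = 2 * (-1 - \<beta>' d)"
  proof -
    have "b = b' + (-2) *s d" using b' by (auto simp: vec_eq_iff)
    then show ?thesis
      by (simp add: p_def Modules.additive.add[OF \<beta>'] additive_int_smult[OF \<beta>'] \<beta>'b')
  qed
  have q: "q = 2 * (-1 + \<beta> d)"
    by (simp add: q_def b' Modules.additive.add[OF \<beta>] additive_int_smult[OF \<beta>] \<beta>b)
  have pb': "p * b' $ i = -2 * b $ i" for i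
    using same[of b] \<beta>b by (simp add: p_def vec_eq_iff)
  have qb: "q * b $ i = -2 * b' $ i" for i
    using same[of b'] \<beta>'b' by (simp add: q_def vec_eq_iff)
  have "p * q * b $ i0 = -2 * (p * b' $ i0)"
    by (simp add: mult.assoc qb)
  also have "\<dots> = 4 * b $ i0" by (simp add: pb')
  finally have "p * q * b $ i0 = 4 * b $ i0" .
  then have "p * q = 4" using i0 by simp
  moreover have "p * q = 4 * ((-1 - \<beta>' d) * (-1 + \<beta> d))" by (simp add: p q algebra_simps)
  ultimately have "(-1 - \<beta>' d) * (-1 + \<beta> d) = 1" by simp
  then have "p = -2 \<or> p = 2" unfolding p by (auto dest: pos_zmult_eq_1_iff_lemma)
  have comp: "\<beta> x * b $ i0 = \<beta>' x * b' $ i0" for x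
    using arg_cong[OF same[of x], of "\<lambda>v. v $ i0"] by simp
  from \<open>p = -2 \<or> p = 2\<close> show ?thesis
  proof
    assume "p = -2"
    then have "b' = b" using pb' by (simp add: vec_eq_iff)
    moreover have "\<beta>' x = \<beta> x" for x
      using comp[of x] i0 \<open>b' = b\<close> by simp
    ultimately show ?thesis by auto
  next
    assume "p = 2"
    then have "b' = - b" using pb' by (auto simp: vec_eq_iff)
    moreover have "\<beta>' x = - \<beta> x" for x
    proof -
      have "\<beta> x * b $ i0 = (- \<beta>' x) * b $ i0" using comp[of x] \<open>b' = - b\<close> by simp
      then show ?thesis using i0 by (metis add.inverse_inverse mult_cancel_right)
    qed
    ultimately show ?thesis by auto
  qed
qed

definition T_marking_of :: "((int^'n) \<times> (int^'n \<Rightarrow> int)) set \<Rightarrow> complex^'n" where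
  "T_marking_of M = half_point (fst (SOME p. p \<in> M))"

lemma T_marking_of_class: "T_marking_of (mark_class b \<beta>) = half_point b"
proof -
  have "(SOME p. p \<in> mark_class b \<beta>) \<in> mark_class b \<beta>"
    by (rule someI[of _ "(b, \<beta>)"]) (simp add: mark_class_def)
  then show ?thesis by (auto simp: T_marking_of_def mark_class_def half_point_uminus)
qed

lemma L_act_mark_class:
  assumes "is_aut w"
  shows "L_act_mark w (mark_class b \<beta>) = mark_class (w b) (\<beta> \<circ> inv w)"
  using Modules.additive.minus[OF is_aut_additive[OF assms]]
  by (auto simp: L_act_mark_def mark_class_def o_def)

lemma is_L_marking_act:
  assumes w: "is_aut w" and "is_L_marking \<sigma> M"
  shows "is_L_marking (w \<circ> \<sigma> \<circ> inv w) (L_act_mark w M)"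
proof -
  obtain b \<beta> where M: "M = mark_class b \<beta>" and \<beta>: "is_hom \<beta>" and \<sigma>: "\<forall>x. \<sigma> x = x + \<beta> x *s b"
    using assms(2) by (auto simp: is_L_marking_def)
  have "is_hom (\<beta> \<circ> inv w)"
    using \<beta> is_aut_additive[OF is_aut_inv[OF w]] by (simp add: is_hom_iff_additive Modules.additive_def)
  moreover have "\<forall>x. (w \<circ> \<sigma> \<circ> inv w) x = x + (\<beta> \<circ> inv w) x *s w b"
    using w \<sigma> by (simp add: is_aut_def bij_is_surj surj_f_inv_f Modules.additive.add[OF is_aut_additive[OF w]]
        additive_vec_smult[OF is_aut_additive[OF w]])
  ultimately show ?thesis
    unfolding is_L_marking_def M L_act_mark_class[OF w] by blast
qed

lemma T_marking_of_act:
  assumes "is_aut w" and "is_L_marking \<sigma> M"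
  shows "T_marking_of (L_act_mark w M) = T_act w (T_marking_of M)"
proof -
  obtain b \<beta> where "M = mark_class b \<beta>" using assms(2) by (auto simp: is_L_marking_def)
  then show ?thesis
    by (simp add: L_act_mark_class[OF assms(1)] T_marking_of_class
        T_act_torus_point[OF is_aut_additive[OF assms(1)]])
qed

lemma bij_betw_T_marking_of:
  assumes "is_reflection \<sigma>"
  shows "bij_betw T_marking_of {M. is_L_marking \<sigma> M} {h. is_T_marking \<sigma> h}"
proof (rule bij_betw_imageI)
  show "inj_on T_marking_of {M. is_L_marking \<sigma> M}"
  proof (rule inj_onI, clarsimp)
    fix M M' assume "is_L_marking \<sigma> M" "is_L_marking \<sigma> M'" "T_marking_of M = T_marking_of M'"
    then obtain b \<beta> b' \<beta>' where M: "M = mark_class b \<beta>" "M' = mark_class b' \<beta>'"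
      and \<beta>: "Modules.additive \<beta>" "\<forall>x. \<sigma> x = x + \<beta> x *s b"
      and \<beta>': "Modules.additive \<beta>'" "\<forall>x. \<sigma> x = x + \<beta>' x *s b'"
      and "half_point b = half_point b'"
      by (auto simp: is_L_marking_def is_hom_iff_additive T_marking_of_class)
    moreover have "\<beta> x *s b = \<beta>' x *s b'" for x
      using \<beta>(2) \<beta>'(2) by (metis add_left_cancel)
    ultimately show "M = M'"
      using rank_one_data_unique_mod2[of \<beta> \<beta>' b b'] reflection_pairing[OF assms]
      by (auto simp: half_point_eq_iff mark_class_def)
  qed
  show "T_marking_of ` {M. is_L_marking \<sigma> M} = {h. is_T_marking \<sigma> h}"
  proof (intro equalityI subsetI)
    fix h assume "h \<in> T_marking_of ` {M. is_L_marking \<sigma> M}"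
    then show "h \<in> {h. is_T_marking \<sigma> h}"
      using half_point_is_T_marking[OF assms]
      by (auto simp: is_L_marking_def is_hom_iff_additive T_marking_of_class)
  next
    fix h assume "h \<in> {h. is_T_marking \<sigma> h}"
    then obtain b \<beta> where "Modules.additive \<beta>" "\<forall>x. \<sigma> x = x + \<beta> x *s b" "half_point b = h"
      using T_marking_lift[OF assms] by blast
    then show "h \<in> T_marking_of ` {M. is_L_marking \<sigma> M}"
      by (auto simp: is_L_marking_def is_hom_iff_additive T_marking_of_class intro!: image_eqI)
  qed
qed

section \<open>The correspondence of marked reflection structures\<close>

definition mrs_map ::
  "(int^'n \<Rightarrow> int^'n) set \<times> ((int^'n \<Rightarrow> int^'n) \<Rightarrow> ((int^'n) \<times> (int^'n \<Rightarrow> int)) set option)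
   \<Rightarrow> (int^'n \<Rightarrow> int^'n) set \<times> ((int^'n \<Rightarrow> int^'n) \<Rightarrow> (complex^'n) option)" where
  "mrs_map S = (fst S, \<lambda>\<sigma>. map_option T_marking_of (snd S \<sigma>))"

lemma refl_group_is_aut: "refl_group W \<Longrightarrow> w \<in> W \<Longrightarrow> is_aut w"
  by (auto simp: refl_group_def aut_subgroup_def Aut_def)

lemma L_mrs_marking: "(W, mk) \<in> L_mrs \<Longrightarrow> mk \<sigma> = Some M \<Longrightarrow> is_L_marking \<sigma> M"
  unfolding L_mrs_def by (cases "\<sigma> \<in> reflections_in W") force+

lemma mrs_map_in_T_mrs:
  assumes "S \<in> L_mrs"
  shows "mrs_map S \<in> T_mrs"
proof -
  obtain W mk where S: "S = (W, mk)" by fastforce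
  have W: "refl_group W" and none: "\<forall>\<sigma>. \<sigma> \<notin> reflections_in W \<longrightarrow> mk \<sigma> = None"
    and some: "\<forall>\<sigma>\<in>reflections_in W. \<exists>M. mk \<sigma> = Some M \<and> is_L_marking \<sigma> M"
    and equiv: "\<forall>w\<in>W. \<forall>\<sigma>\<in>reflections_in W. mk (w \<circ> \<sigma> \<circ> inv w) = map_option (L_act_mark w) (mk \<sigma>)"
    using assms by (auto simp: S L_mrs_def)
  have "\<exists>h. map_option T_marking_of (mk \<sigma>) = Some h \<and> is_T_marking \<sigma> h"
    if "\<sigma> \<in> reflections_in W" for \<sigma>
    using some that bij_betwE[OF bij_betw_T_marking_of] by (fastforce simp: reflections_in_def)
  moreover have "map_option T_marking_of (mk (w \<circ> \<sigma> \<circ> inv w))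
      = map_option (T_act w) (map_option T_marking_of (mk \<sigma>))"
    if "w \<in> W" "\<sigma> \<in> reflections_in W" for w \<sigma>
    using that equiv some T_marking_of_act[OF refl_group_is_aut[OF W]] by fastforce
  ultimately show ?thesis using W none by (simp add: S T_mrs_def mrs_map_def)
qed

lemma inj_on_mrs_map: "inj_on mrs_map L_mrs"
proof (rule inj_onI)
  fix S S' assume "S \<in> L_mrs" "S' \<in> L_mrs" and eq: "mrs_map S = mrs_map S'"
  then obtain W mk mk' where S: "S = (W, mk)" "S' = (W, mk')"
    by (cases S, cases S') (simp add: mrs_map_def)
  have "mk \<sigma> = mk' \<sigma>" for \<sigma>
  proof (cases "\<sigma> \<in> reflections_in W")
    case False
    then show ?thesis using \<open>S \<in> L_mrs\<close> \<open>S' \<in> L_mrs\<close> by (simp add: S L_mrs_def)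
  next
    case True
    then obtain M M' where "mk \<sigma> = Some M" "mk' \<sigma> = Some M'"
      and "is_L_marking \<sigma> M" "is_L_marking \<sigma> M'"
      using \<open>S \<in> L_mrs\<close> \<open>S' \<in> L_mrs\<close> by (force simp: S L_mrs_def)
    moreover have "map_option T_marking_of (mk \<sigma>) = map_option T_marking_of (mk' \<sigma>)"
      using eq by (simp add: S mrs_map_def fun_eq_iff)
    ultimately show ?thesis
      using bij_betw_imp_inj_on[OF bij_betw_T_marking_of] True
      by (force simp: reflections_in_def dest: inj_onD)
  qed
  then show "S = S'" by (simp add: S fun_eq_iff)
qed

lemma T_mrs_subset_image_mrs_map:
  fixes mh :: "(int^'n \<Rightarrow> int^'n) \<Rightarrow> (complex^'n) option"
  assumes "(W, mh) \<in> T_mrs"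
  shows "(W, mh) \<in> mrs_map ` L_mrs"
proof -
  have W: "refl_group W" and none: "\<forall>\<sigma>. \<sigma> \<notin> reflections_in W \<longrightarrow> mh \<sigma> = None"
    and some: "\<forall>\<sigma>\<in>reflections_in W. \<exists>h. mh \<sigma> = Some h \<and> is_T_marking \<sigma> h"
    and equiv: "\<forall>w\<in>W. \<forall>\<sigma>\<in>reflections_in W. mh (w \<circ> \<sigma> \<circ> inv w) = map_option (T_act w) (mh \<sigma>)"
    using assms by (auto simp: T_mrs_def)
  define lift where "lift \<sigma> = the_inv_into {M. is_L_marking \<sigma> M} T_marking_of"
    for \<sigma> :: "int^'n \<Rightarrow> int^'n"
  have lift: "is_L_marking \<sigma> (lift \<sigma> h)" "T_marking_of (lift \<sigma> h) = h"
    if "is_reflection \<sigma>" "is_T_marking \<sigma> h" for \<sigma> h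
    using bij_betwE[OF bij_betw_the_inv_into[OF bij_betw_T_marking_of]]
      f_the_inv_into_f_bij_betw[OF bij_betw_T_marking_of] that
    by (auto simp: lift_def)
  define mk where "mk \<sigma> = map_option (lift \<sigma>) (mh \<sigma>)" for \<sigma>
  have mk_some: "mk \<sigma> = Some (lift \<sigma> h) \<and> is_L_marking \<sigma> (lift \<sigma> h) \<and> T_marking_of (lift \<sigma> h) = h"
    if "\<sigma> \<in> reflections_in W" "mh \<sigma> = Some h" for \<sigma> h
    using that some lift by (auto simp: mk_def reflections_in_def)
  have "mk (w \<circ> \<sigma> \<circ> inv w) = map_option (L_act_mark w) (mk \<sigma>)"
    if w: "w \<in> W" and \<sigma>: "\<sigma> \<in> reflections_in W" for w \<sigma>
  proof -
    obtain h where h: "mh \<sigma> = Some h" using some \<sigma> by blast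
    have h': "mh (w \<circ> \<sigma> \<circ> inv w) = Some (T_act w h)" using equiv w \<sigma> h by simp
    then have \<sigma>': "w \<circ> \<sigma> \<circ> inv w \<in> reflections_in W" using none by fastforce
    have w_aut: "is_aut w" by (rule refl_group_is_aut[OF W w])
    have "lift (w \<circ> \<sigma> \<circ> inv w) (T_act w h) = L_act_mark w (lift \<sigma> h)"
      unfolding lift_def[of "w \<circ> \<sigma> \<circ> inv w"]
    proof (rule the_inv_into_f_eq)
      show "inj_on T_marking_of {M. is_L_marking (w \<circ> \<sigma> \<circ> inv w) M}"
        using \<sigma>' bij_betw_T_marking_of bij_betw_imp_inj_on by (auto simp: reflections_in_def)
      show "T_marking_of (L_act_mark w (lift \<sigma> h)) = T_act w h"
        using mk_some[OF \<sigma> h] T_marking_of_act[OF w_aut, of \<sigma>] by simp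
      show "L_act_mark w (lift \<sigma> h) \<in> {M. is_L_marking (w \<circ> \<sigma> \<circ> inv w) M}"
        using mk_some[OF \<sigma> h] is_L_marking_act[OF w_aut] by simp
    qed
    then show ?thesis using mk_some[OF \<sigma> h] mk_some[OF \<sigma>' h'] by simp
  qed
  then have "(W, mk) \<in> L_mrs"
    using W none some mk_some by (auto simp: L_mrs_def mk_def) 
  moreover have "mrs_map (W, mk) = (W, mh)"
  proof -
    have "map_option T_marking_of (mk \<sigma>) = mh \<sigma>" for \<sigma>
      using none some mk_some by (cases "\<sigma> \<in> reflections_in W") (auto simp: mk_def)
    then show ?thesis by (simp add: mrs_map_def fun_eq_iff)
  qed
  ultimately show ?thesis by force
qed

lemma mrs_map_transport:
  assumes g: "g \<in> Aut" and S: "S \<in> L_mrs"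
  shows "mrs_map (L_transport g S) = T_transport g (mrs_map S)"
proof -
  have "map_option T_marking_of (map_option (L_act_mark g) M)
      = map_option (T_act g) (map_option T_marking_of M)"
    if "snd S \<tau> = M" for \<tau> M
  proof (cases M)
    case (Some m)
    then have "is_L_marking \<tau> m"
      using S that L_mrs_marking by (metis prod.collapse)
    then show ?thesis using Some g T_marking_of_act by (simp add: Aut_def)
  qed simp
  then show ?thesis by (simp add: mrs_map_def L_transport_def T_transport_def)
qed

theorem proposition2p16:
  "\<exists>\<Phi>. bij_betw \<Phi> (L_mrs :: ((int^'n::finite \<Rightarrow> int^'n) set \<times> _) set) T_mrs \<and>
        (\<forall>S\<in>L_mrs. fst (\<Phi> S) = fst S) \<and>
        (\<forall>g\<in>Aut. \<forall>S\<in>L_mrs. \<Phi> (L_transport g S) = T_transport g (\<Phi> S))"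
proof (intro exI conjI ballI)
  have "mrs_map ` L_mrs = T_mrs"
    using mrs_map_in_T_mrs T_mrs_subset_image_mrs_map by fastforce
  with inj_on_mrs_map show "bij_betw mrs_map L_mrs T_mrs" by (rule bij_betw_imageI)
  show "fst (mrs_map S) = fst S" for S by (simp add: mrs_map_def)
  show "mrs_map (L_transport g S) = T_transport g (mrs_map S)" if "g \<in> Aut" "S \<in> L_mrs" for g S
    using that by (rule mrs_map_transport)
qed

end
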